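(* Let $\alpha$ be irrational whose continued fraction partial quotients are bounded in average. Then the Sós permutations $\beta_\alpha$ of $[n]$ satisfy $D(\beta_\alpha)=O(\log n)$ as $n\to\infty$ (implicit constant depending on $\alpha$).
   Context: $[n]=\{1,\dots,n\}$, identified with $\mathbb{Z}_n$; $\{x\}$ is the fractional part of $x$. For irrational $\alpha$, $\beta_\alpha$ is the permutation of $[n]$ with $\beta_\alpha(t)=|\{s\in[n]:\{\alpha s\}\le\{\alpha t\}\}|$. If $\alpha=[a_0;a_1,a_2,\dots]$, its partial quotients are bounded in average if there is $B$ with $a_1+\dots+a_m\le Bm$ for all $m\ge1$. An interval of $\mathbb{Z}_n$ is any subset that is the image of an interval of consecutive integers under the projection $\mathbb{Z}\to\mathbb{Z}_n$ (wrap-around allowed). For $S,T\subseteq\mathbb{Z}_n$, $D_T(S)=\bigl|\,|S\cap T|-|S||T|/n\,\bigr|$, and $D(\sigma)=\max_{I,J}D_J(\sigma(I))$ over all intervals $I,J$. *)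

theory Defs
  imports Complex_Main "HOL-Library.Landau_Symbols"
begin

text \<open>Continued fraction expansion alpha = [a0; a1, a2, ...]:
  complete quotients x_0 = alpha, x_(k+1) = 1 / frac(x_k); partial quotients a_k = floor(x_k).\<close>
fun cf_rem :: "real \<Rightarrow> nat \<Rightarrow> real" where
  "cf_rem x 0 = x"
| "cf_rem x (Suc k) = 1 / frac (cf_rem x k)"

definition cf_quot :: "real \<Rightarrow> nat \<Rightarrow> int" where
  "cf_quot x k = floor (cf_rem x k)"

definition pq_bounded_in_average :: "real \<Rightarrow> bool" where
  "pq_bounded_in_average x \<longleftrightarrow>
     (\<exists>B::real. \<forall>m\<ge>1. real_of_int (\<Sum>k=1..m. cf_quot x k) \<le> B * real m)"

definition sos_perm :: "real \<Rightarrow> nat \<Rightarrow> nat \<Rightarrow> nat" where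
  "sos_perm \<alpha> n t = card {s \<in> {1..n}. frac (\<alpha> * real s) \<le> frac (\<alpha> * real t)}"

text \<open>Intervals of Z_n, with [n] identified with Z_n via t \<mapsto> t mod n:
  images of {a, a+1, ..., a+L-1} (wrap-around allowed), represented inside {1..n}.
  Every interval arises with a < n and L \<le> n (L = 0 gives the empty set).\<close>
definition zn_intervals :: "nat \<Rightarrow> nat set set" where
  "zn_intervals n = {{(a + i) mod n + 1 | i. i < L} | a L. a < n \<and> L \<le> n}"

definition disc_set :: "nat \<Rightarrow> nat set \<Rightarrow> nat set \<Rightarrow> real" where
  "disc_set n T S = \<bar>real (card (S \<inter> T)) - real (card S) * real (card T) / real n\<bar>"

definition perm_disc :: "nat \<Rightarrow> (nat \<Rightarrow> nat) \<Rightarrow> real" where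
  "perm_disc n \<sigma> = Max {disc_set n J (\<sigma> ` I) | I J. I \<in> zn_intervals n \<and> J \<in> zn_intervals n}"

end

theory Submission
  imports Defs "HOL-Library.Discrete_Functions"
begin

text \<open>
  Let \<open>p/q\<close> be a convergent of \<open>\<alpha>\<close>, so \<open>gcd p q = 1\<close> and \<open>|q\<alpha> - p| \<le> 1/q\<close>.
  The points \<open>c + j\<alpha>\<close>, \<open>j < q\<close>, are then within \<open>1/q\<close> of the grid \<open>c + jp/q\<close>, whose
  residues modulo \<open>1\<close> are \<open>c + i/q\<close>, \<open>i < q\<close>; by Hermite's identity, the number of \<open>j < q\<close>
  with \<open>frac (c + j\<alpha>) < x\<close> differs from \<open>qx\<close> by at most \<open>3\<close>.  Splitting a run of length
  \<open>L < q\<^sub>k\<close> greedily into runs of lengths \<open>q\<^sub>i\<close> (Ostrowski) uses at most \<open>a\<^sub>i\<^sub>+\<^sub>1\<close> runs of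
  length \<open>q\<^sub>i\<close>, so the discrepancy of \<open>frac (j\<alpha>)\<close> on any run of length \<open>L \<le> n\<close> is
  \<open>O(a\<^sub>1 + \<dots> + a\<^sub>k) = O(k)\<close>, and \<open>k = O(log n)\<close> because \<open>q\<^sub>2\<^sub>j \<ge> 2\<^sup>j\<close>.

  For the Sos permutation, the positions of rank at most \<open>r\<close> are those \<open>s\<close> with
  \<open>frac (\<alpha>s)\<close> below a threshold; a cyclic interval of ranks is a signed sum of three
  initial segments of ranks and a cyclic interval of positions is the union of two runs, so
  every \<open>D\<^sub>J(\<beta>\<^sub>\<alpha>(I))\<close> is bounded by a fixed multiple of the run discrepancy.
\<close>

section \<open>Continued fractions\<close>

lemma frac_pos_if_irrational:
  assumes "x \<notin> \<rat>" shows "frac x > 0"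
proof -
  have "frac x \<noteq> 0" using assms frac_eq_0_iff Ints_subset_Rats by blast
  then show ?thesis using frac_ge_0 by (simp add: order_less_le)
qed

lemma cf_rem_irrational:
  assumes "\<alpha> \<notin> \<rat>" shows "cf_rem \<alpha> k \<notin> \<rat>"
proof (induction k)
  case (Suc k)
  have "x \<in> \<rat>" if "1 / frac x \<in> \<rat>" for x :: real
  proof -
    have "frac x \<in> \<rat>"
      using that by (metis Rats_inverse inverse_eq_divide inverse_inverse_eq)
    then show ?thesis
      unfolding frac_def by (metis Rats_add Rats_of_int diff_add_cancel)
  qed
  then show ?case using Suc.IH by (metis cf_rem.simps(2))
qed (use assms in simp)

lemma cf_rem_Suc_gt_1:
  assumes "\<alpha> \<notin> \<rat>" shows "cf_rem \<alpha> (Suc k) > 1"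
  using frac_pos_if_irrational[OF cf_rem_irrational[OF assms]] frac_lt_1[of "cf_rem \<alpha> k"]
  by simp

lemma cf_quot_Suc_ge_1:
  assumes "\<alpha> \<notin> \<rat>" shows "cf_quot \<alpha> (Suc k) \<ge> 1"
  using cf_rem_Suc_gt_1[OF assms, of k] unfolding cf_quot_def by (simp add: le_floor_iff)

lemma cf_rem_eq:
  assumes "\<alpha> \<notin> \<rat>"
  shows "cf_rem \<alpha> k = cf_quot \<alpha> k + 1 / cf_rem \<alpha> (Suc k)"
  using frac_pos_if_irrational[OF cf_rem_irrational[OF assms, of k]]
  by (simp add: cf_quot_def frac_def)

text \<open>Numerators and denominators of the convergents, shifted by one:
  \<open>cf_num \<alpha> (Suc k) / cf_den \<alpha> (Suc k)\<close> is the usual \<open>p\<^sub>k / q\<^sub>k\<close>,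
  and index \<open>0\<close> holds \<open>p\<^sub>-\<^sub>1 = 1\<close>, \<open>q\<^sub>-\<^sub>1 = 0\<close>.\<close>

fun cf_num :: "real \<Rightarrow> nat \<Rightarrow> int" where
  "cf_num \<alpha> 0 = 1"
| "cf_num \<alpha> (Suc 0) = cf_quot \<alpha> 0"
| "cf_num \<alpha> (Suc (Suc k)) = cf_quot \<alpha> (Suc k) * cf_num \<alpha> (Suc k) + cf_num \<alpha> k"

fun cf_den :: "real \<Rightarrow> nat \<Rightarrow> nat" where
  "cf_den \<alpha> 0 = 0"
| "cf_den \<alpha> (Suc 0) = 1"
| "cf_den \<alpha> (Suc (Suc k)) = nat (cf_quot \<alpha> (Suc k)) * cf_den \<alpha> (Suc k) + cf_den \<alpha> k"

lemma cf_den_Suc_Suc_int: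
  assumes "\<alpha> \<notin> \<rat>"
  shows "int (cf_den \<alpha> (Suc (Suc k))) = cf_quot \<alpha> (Suc k) * int (cf_den \<alpha> (Suc k)) + int (cf_den \<alpha> k)"
  using cf_quot_Suc_ge_1[OF assms, of k] by simp

lemma cf_den_pos_mono:
  assumes "\<alpha> \<notin> \<rat>" shows "cf_den \<alpha> (Suc k) \<ge> 1 \<and> cf_den \<alpha> k \<le> cf_den \<alpha> (Suc k)"
proof (induction k)
  case (Suc k)
  have "1 \<le> nat (cf_quot \<alpha> (Suc k))" using cf_quot_Suc_ge_1[OF assms, of k] by simp
  then have "cf_den \<alpha> (Suc k) \<le> cf_den \<alpha> (Suc (Suc k))" by (simp add: trans_le_add1)
  then show ?case using Suc by linarith
qed simp

lemma cf_den_pos: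
  assumes "\<alpha> \<notin> \<rat>" shows "cf_den \<alpha> (Suc k) > 0"
  using cf_den_pos_mono[OF assms, of k] by linarith

lemma cf_den_Suc_Suc_le:
  assumes "\<alpha> \<notin> \<rat>"
  shows "cf_den \<alpha> (Suc (Suc k)) \<le> (nat (cf_quot \<alpha> (Suc k)) + 1) * cf_den \<alpha> (Suc k)"
  using cf_den_pos_mono[OF assms, of k] by simp

lemma cf_den_ge_power2:
  assumes "\<alpha> \<notin> \<rat>" shows "2 ^ j \<le> cf_den \<alpha> (Suc (2 * j))"
proof (induction j)
  case (Suc j)
  let ?m = "Suc (2 * j)"
  have "1 \<le> nat (cf_quot \<alpha> (Suc ?m))"
    using cf_quot_Suc_ge_1[OF assms, of ?m] by simp
  then have "cf_den \<alpha> (Suc ?m) \<le> nat (cf_quot \<alpha> (Suc ?m)) * cf_den \<alpha> (Suc ?m)"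
    by (metis mult_1 mult_le_mono1)
  moreover have "cf_den \<alpha> ?m \<le> cf_den \<alpha> (Suc ?m)"
    using cf_den_pos_mono[OF assms] by blast
  ultimately have "2 * cf_den \<alpha> ?m \<le> cf_den \<alpha> (Suc (Suc ?m))"
    unfolding cf_den.simps(3)[of \<alpha> ?m] by linarith
  then show ?case using Suc by simp
qed simp

lemma cf_det:
  assumes "\<alpha> \<notin> \<rat>"
  shows "cf_num \<alpha> (Suc k) * int (cf_den \<alpha> k) - cf_num \<alpha> k * int (cf_den \<alpha> (Suc k)) = (-1) ^ Suc k"
proof (induction k)
  case (Suc k)
  then show ?case
    unfolding cf_den_Suc_Suc_int[OF assms] cf_num.simps by (simp add: algebra_simps)
qed simp

lemma cf_coprime:
  assumes "\<alpha> \<notin> \<rat>"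
  shows "coprime (cf_num \<alpha> (Suc k)) (int (cf_den \<alpha> (Suc k)))"
proof (rule coprimeI)
  fix c assume "c dvd cf_num \<alpha> (Suc k)" and "c dvd int (cf_den \<alpha> (Suc k))"
  then have "c dvd cf_num \<alpha> (Suc k) * int (cf_den \<alpha> k) - cf_num \<alpha> k * int (cf_den \<alpha> (Suc k))"
    by (simp add: dvd_diff)
  then have "c dvd (-1) ^ Suc k" by (simp only: cf_det[OF assms])
  then show "is_unit c" by (rule dvd_unit_imp_unit) simp
qed

lemma cf_complete_quotient_identity:
  assumes "\<alpha> \<notin> \<rat>"
  shows "\<alpha> * (real (cf_den \<alpha> (Suc k)) * cf_rem \<alpha> (Suc k) + cf_den \<alpha> k)
         = cf_num \<alpha> (Suc k) * cf_rem \<alpha> (Suc k) + cf_num \<alpha> k"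
proof (induction k)
  case 0
  have "\<alpha> = cf_quot \<alpha> 0 + frac \<alpha>" by (simp add: cf_quot_def frac_def)
  then show ?case using frac_pos_if_irrational[OF assms] by (simp add: field_simps)
next
  case (Suc k)
  define x where "x = cf_rem \<alpha> (Suc k)"
  define y where "y = cf_rem \<alpha> (Suc (Suc k))"
  have "y > 1" unfolding y_def by (rule cf_rem_Suc_gt_1[OF assms])
  then have "y > 0" by simp
  have x: "x = cf_quot \<alpha> (Suc k) + 1 / y"
    unfolding x_def y_def by (rule cf_rem_eq[OF assms])
  have "real (cf_den \<alpha> (Suc (Suc k)))
      = cf_quot \<alpha> (Suc k) * real (cf_den \<alpha> (Suc k)) + real (cf_den \<alpha> k)"
    using cf_den_Suc_Suc_int[OF assms, of k] by (metis of_int_add of_int_mult of_int_of_nat_eq)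
  then have "\<alpha> * (real (cf_den \<alpha> (Suc (Suc k))) * y + cf_den \<alpha> (Suc k))
      = y * (\<alpha> * (real (cf_den \<alpha> (Suc k)) * x + cf_den \<alpha> k))"
    using \<open>y > 0\<close> by (simp add: x field_simps)
  also have "\<dots> = y * (cf_num \<alpha> (Suc k) * x + cf_num \<alpha> k)"
    using Suc unfolding x_def by simp
  also have "\<dots> = cf_num \<alpha> (Suc (Suc k)) * y + cf_num \<alpha> (Suc k)"
    using \<open>y > 0\<close> by (simp add: x field_simps)
  finally show ?case unfolding y_def .
qed

lemma cf_approx:
  assumes "\<alpha> \<notin> \<rat>"
  shows "\<bar>real (cf_den \<alpha> (Suc k)) * \<alpha> - cf_num \<alpha> (Suc k)\<bar> \<le> 1 / cf_den \<alpha> (Suc k)"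
proof -
  define y where "y = cf_rem \<alpha> (Suc k)"
  define q where "q = real (cf_den \<alpha> (Suc k))"
  define q' where "q' = real (cf_den \<alpha> k)"
  define p where "p = real_of_int (cf_num \<alpha> (Suc k))"
  define p' where "p' = real_of_int (cf_num \<alpha> k)"
  have "q > 0" unfolding q_def using cf_den_pos[OF assms, of k] by simp
  moreover have "y > 1" unfolding y_def by (rule cf_rem_Suc_gt_1[OF assms])
  ultimately have "q * 1 \<le> q * y" by (intro mult_left_mono) auto
  moreover have "q' \<ge> 0" unfolding q'_def by simp
  ultimately have denom: "q * y + q' \<ge> q" "q > 0" using \<open>q > 0\<close> by linarith+
  have identity: "\<alpha> * (q * y + q') = p * y + p'"
    unfolding q_def y_def q'_def p_def p'_def by (rule cf_complete_quotient_identity[OF assms])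
  have "(q * \<alpha> - p) * (q * y + q') = q * (\<alpha> * (q * y + q')) - p * (q * y + q')"
    by (simp add: algebra_simps)
  also have "\<dots> = -(p * q' - p' * q)"
    unfolding identity by (simp add: algebra_simps)
  also have "p * q' - p' * q = (-1) ^ Suc k"
    unfolding p_def q'_def p'_def q_def
    using arg_cong[OF cf_det[OF assms, of k], of real_of_int] by simp
  finally have "(q * \<alpha> - p) * (q * y + q') = (-1) ^ k" by simp
  then have "\<bar>(q * \<alpha> - p) * (q * y + q')\<bar> = 1" by simp
  then have "\<bar>q * \<alpha> - p\<bar> * (q * y + q') = 1"
    using denom by (simp add: abs_mult)
  then have "\<bar>q * \<alpha> - p\<bar> = 1 / (q * y + q')"
    using denom by (simp add: field_simps)
  also have "\<dots> \<le> 1 / q" using denom by (simp add: frac_le)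
  finally show ?thesis unfolding q_def p_def .
qed

section \<open>Counting in one block of a convergent denominator\<close>

lemma sum_lessThan_add:
  fixes m n :: nat
  shows "(\<Sum>i<m + n. g i) = (\<Sum>i<m. g i) + (\<Sum>i<n. g (m + i))"
  by (induction n) (simp_all add: add.assoc)

lemma sum_div_consecutive:
  assumes "q > 0"
  shows "(\<Sum>i<q. (N + int i) div int q) = N"
proof -
  define f where "f N = (\<Sum>i<q. (N + int i) div int q)" for N
  have step: "f (N + 1) = f N + 1" for N
  proof -
    have "f N + (N + int q) div int q = N div int q + f (N + 1)"
      unfolding f_def using sum.lessThan_Suc_shift[of "\<lambda>i. (N + int i) div int q" q]
      by (simp add: ac_simps)
    moreover have "(N + int q) div int q = N div int q + 1" using assms by simp
    ultimately show ?thesis by linarith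
  qed
  have "f 0 = 0" unfolding f_def by (intro sum.neutral) (simp add: div_pos_pos_trivial)
  then have "f N = N"
  proof (induction N rule: int_induct[where k = 0])
    case (step2 i)
    then show ?case using step[of "i - 1"] by simp
  qed (simp_all add: step)
  then show ?thesis unfolding f_def .
qed

lemma bij_betw_mult_mod:
  assumes "q > 0" and "coprime p (int q)"
  shows "bij_betw (\<lambda>j. nat ((int j * p) mod int q)) {..<q} {..<q}"
proof -
  let ?g = "\<lambda>j. nat ((int j * p) mod int q)"
  have "inj_on ?g {..<q}"
  proof
    fix j j' assume j: "j \<in> {..<q}" "j' \<in> {..<q}" and "?g j = ?g j'"
    then have "(int j * p) mod int q = (int j' * p) mod int q"
      using assms(1) by (simp add: eq_nat_nat_iff)
    then have "int q dvd (int j - int j') * p" by (simp add: mod_eq_dvd_iff left_diff_distrib)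
    then have "int q dvd int j - int j'"
      using assms(2) by (metis coprime_commute coprime_dvd_mult_left_iff)
    moreover have "\<bar>int j - int j'\<bar> < int q" using j by auto
    ultimately show "j = j'" using dvd_imp_le_int[of "int j - int j'" "int q"] by linarith
  qed
  moreover have "?g ` {..<q} \<subseteq> {..<q}"
  proof
    fix i assume "i \<in> ?g ` {..<q}"
    then obtain j where "i = ?g j" by blast
    then show "i \<in> {..<q}" using assms(1) by (simp add: nat_less_iff)
  qed
  ultimately show ?thesis unfolding bij_betw_def using endo_inj_surj by blast
qed

lemma sum_div_mult_progression:
  assumes "q > 0" and "coprime p (int q)"
  shows "(\<Sum>j<q. (N + int j * p) div int q) = N + (\<Sum>j<q. (int j * p) div int q)"
proof -
  let ?g = "\<lambda>j. nat ((int j * p) mod int q)"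
  have "(N + int j * p) div int q = (N + int (?g j)) div int q + (int j * p) div int q" for j
  proof -
    have "(N + int j * p) div int q
        = (N + (int j * p) mod int q + (int j * p) div int q * int q) div int q"
      by (simp only: add.assoc mod_div_mult_eq)
    also have "\<dots> = (int j * p) div int q + (N + (int j * p) mod int q) div int q"
      by (rule div_mult_self1) (use assms(1) in simp)
    finally show ?thesis using assms(1) by simp
  qed
  then have "(\<Sum>j<q. (N + int j * p) div int q)
      = (\<Sum>j<q. (N + int (?g j)) div int q) + (\<Sum>j<q. (int j * p) div int q)"
    by (simp add: sum.distrib)
  also have "(\<Sum>j<q. (N + int (?g j)) div int q) = (\<Sum>i<q. (N + int i) div int q)"
    by (rule sum.reindex_bij_betw[OF bij_betw_mult_mod[OF assms]])
  finally show ?thesis using sum_div_consecutive[OF assms(1)] by simp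
qed

lemma floor_add_divide_nat:
  assumes "q > 0"
  shows "\<lfloor>u + real_of_int m / real q\<rfloor> = (\<lfloor>real q * u\<rfloor> + m) div int q"
proof -
  have "u + real_of_int m / real q = (real q * u + real_of_int m) / real_of_int (int q)"
    using assms by (simp add: field_simps)
  also have "\<lfloor>\<dots>\<rfloor> = \<lfloor>real q * u + real_of_int m\<rfloor> div int q"
    by (rule floor_divide_real_eq_div) simp
  finally show ?thesis by simp
qed

lemma sum_floor_rational_progression:
  assumes "q > 0" and "coprime p (int q)"
  shows "(\<Sum>j<q. \<lfloor>u + real j * p / q\<rfloor>) = \<lfloor>real q * u\<rfloor> + (\<Sum>j<q. (int j * p) div int q)"
proof -
  have "\<lfloor>u + real j * p / q\<rfloor> = (\<lfloor>real q * u\<rfloor> + int j * p) div int q" for j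
    using floor_add_divide_nat[OF assms(1), of u "int j * p"] by simp
  then show ?thesis by (simp add: sum_div_mult_progression[OF assms])
qed

lemma sum_floor_near_rational_progression:
  fixes \<alpha> u :: real
  assumes "q > 0" and "coprime p (int q)" and "\<bar>real q * \<alpha> - p\<bar> \<le> 1 / q"
  defines "K \<equiv> \<lfloor>real q * u\<rfloor> + (\<Sum>j<q. (int j * p) div int q)"
  shows "K - 1 \<le> (\<Sum>j<q. \<lfloor>u + real j * \<alpha>\<rfloor>) \<and> (\<Sum>j<q. \<lfloor>u + real j * \<alpha>\<rfloor>) \<le> K + 1"
proof -
  define G where "G v = (\<Sum>j<q. \<lfloor>v + real j * p / q\<rfloor>)" for v
  have shift: "\<lfloor>real q * (u + d / q)\<rfloor> = \<lfloor>real q * u\<rfloor> + d" for d :: int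
    using assms(1) by (simp add: distrib_left)
  have close: "\<bar>real j * \<alpha> - real j * p / q\<bar> \<le> 1 / q" if "j < q" for j
  proof -
    have "real j * \<alpha> - real j * p / q = real j / q * (real q * \<alpha> - p)"
      using assms(1) by (simp add: field_simps)
    then have "\<bar>real j * \<alpha> - real j * p / q\<bar> = real j / q * \<bar>real q * \<alpha> - p\<bar>"
      by (simp add: abs_mult)
    also have "\<dots> \<le> 1 * (1 / q)"
      using that assms(3) by (intro mult_mono) auto
    finally show ?thesis by simp
  qed
  have "G (u - 1 / q) \<le> (\<Sum>j<q. \<lfloor>u + real j * \<alpha>\<rfloor>)"
    unfolding G_def
  proof (intro sum_mono floor_mono)
    fix j assume "j \<in> {..<q}"
    then show "u - 1 / q + real j * p / q \<le> u + real j * \<alpha>"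
      using close[of j] unfolding abs_le_iff by simp
  qed
  moreover have "(\<Sum>j<q. \<lfloor>u + real j * \<alpha>\<rfloor>) \<le> G (u + 1 / q)"
    unfolding G_def
  proof (intro sum_mono floor_mono)
    fix j assume "j \<in> {..<q}"
    then show "u + real j * \<alpha> \<le> u + 1 / q + real j * p / q"
      using close[of j] unfolding abs_le_iff by simp
  qed
  moreover have G_shift: "G (u + d / q) = K + d" for d :: int
    unfolding G_def K_def sum_floor_rational_progression[OF assms(1,2)] shift by simp
  then have "G (u - 1 / q) = K - 1" "G (u + 1 / q) = K + 1"
    using G_shift[of "-1"] G_shift[of 1] by simp_all
  ultimately show ?thesis by linarith
qed

lemma frac_less_indicator:
  assumes "0 \<le> x" "x \<le> 1"
  shows "(if frac y < x then 1 else 0) = real_of_int (\<lfloor>y\<rfloor> - \<lfloor>y - x\<rfloor>)"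
proof (cases "frac y < x")
  case True
  then have "\<lfloor>y - x\<rfloor> = \<lfloor>y\<rfloor> - 1"
    using assms unfolding frac_def by (simp add: floor_eq_iff) linarith
  then show ?thesis using True by simp
next
  case False
  then have "\<lfloor>y - x\<rfloor> = \<lfloor>y\<rfloor>"
    using assms unfolding frac_def by (simp add: floor_eq_iff) linarith
  then show ?thesis using False by simp
qed

lemma count_frac_less_near_rational:
  fixes \<alpha> c x :: real
  assumes "q > 0" and "coprime p (int q)" and "\<bar>real q * \<alpha> - p\<bar> \<le> 1 / q"
    and "0 \<le> x" "x \<le> 1"
  shows "\<bar>(\<Sum>j<q. if frac (c + real j * \<alpha>) < x then 1 else 0) - real q * x\<bar> \<le> 3"
proof -
  define S where "S v = (\<Sum>j<q. \<lfloor>v + real j * \<alpha>\<rfloor>)" for v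
  define D where "D = \<lfloor>real q * c\<rfloor> - \<lfloor>real q * (c - x)\<rfloor>"
  have "(\<Sum>j<q. if frac (c + real j * \<alpha>) < x then 1 else 0) = real_of_int (S c - S (c - x))"
    unfolding S_def of_int_diff of_int_sum sum_subtractf[symmetric]
    using frac_less_indicator[OF assms(4,5)] by (intro sum.cong) (simp_all add: algebra_simps)
  moreover have "S c - S (c - x) \<le> D + 2" "D - 2 \<le> S c - S (c - x)"
    using sum_floor_near_rational_progression[OF assms(1-3), of c]
      sum_floor_near_rational_progression[OF assms(1-3), of "c - x"]
    unfolding S_def D_def by linarith+
  then have "real_of_int (S c - S (c - x)) \<le> real_of_int D + 2"
    "real_of_int D - 2 \<le> real_of_int (S c - S (c - x))"
    by (simp_all flip: of_int_le_iff)
  moreover have "\<bar>real_of_int D - real q * x\<bar> \<le> 1"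
    unfolding D_def by (simp add: algebra_simps) linarith
  ultimately show ?thesis by linarith
qed

section \<open>Ostrowski decomposition of runs\<close>

definition frac_count :: "real \<Rightarrow> nat \<Rightarrow> nat \<Rightarrow> real \<Rightarrow> real" where
  "frac_count \<alpha> a L x = (\<Sum>j<L. if frac (\<alpha> * real (a + j)) < x then 1 else 0)"

lemma frac_count_add:
  "frac_count \<alpha> a (L + M) x = frac_count \<alpha> a L x + frac_count \<alpha> (a + L) M x"
  unfolding frac_count_def sum_lessThan_add by (simp add: add.assoc)

lemma frac_count_cf_den:
  fixes x :: real
  assumes "\<alpha> \<notin> \<rat>" and "0 \<le> x" "x \<le> 1"
  shows "\<bar>frac_count \<alpha> a (cf_den \<alpha> (Suc k)) x - cf_den \<alpha> (Suc k) * x\<bar> \<le> 3"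
proof -
  have "frac_count \<alpha> a (cf_den \<alpha> (Suc k)) x
      = (\<Sum>j<cf_den \<alpha> (Suc k). if frac (\<alpha> * a + real j * \<alpha>) < x then 1 else 0)"
    unfolding frac_count_def by (simp add: algebra_simps)
  then show ?thesis
    using count_frac_less_near_rational[OF cf_den_pos[OF assms(1)] cf_coprime[OF assms(1)]
        cf_approx[OF assms(1)] assms(2,3)]
    by simp
qed

lemma frac_count_mult_cf_den:
  fixes x :: real
  assumes "\<alpha> \<notin> \<rat>" and "0 \<le> x" "x \<le> 1"
  shows "\<bar>frac_count \<alpha> a (m * cf_den \<alpha> (Suc k)) x - real (m * cf_den \<alpha> (Suc k)) * x\<bar> \<le> 3 * m"
proof (induction m arbitrary: a)
  case (Suc m)
  let ?q = "cf_den \<alpha> (Suc k)"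
  have "frac_count \<alpha> a (Suc m * ?q) x = frac_count \<alpha> a (m * ?q) x + frac_count \<alpha> (a + m * ?q) ?q x"
    by (simp add: frac_count_add[symmetric] add.commute)
  then show ?case
    using Suc.IH[of a] frac_count_cf_den[OF assms, of "a + m * ?q" k] by (simp add: algebra_simps)
qed (simp add: frac_count_def)

lemma frac_count_less_cf_den:
  fixes x :: real
  assumes "\<alpha> \<notin> \<rat>" and "0 \<le> x" "x \<le> 1" and "L < cf_den \<alpha> (Suc k)"
  shows "\<bar>frac_count \<alpha> a L x - L * x\<bar> \<le> 3 * real_of_int (\<Sum>i=1..k. cf_quot \<alpha> i)"
  using assms(4)
proof (induction k arbitrary: a L)
  case 0
  then show ?case by (simp add: frac_count_def)
next
  case (Suc k)
  let ?q = "cf_den \<alpha> (Suc k)"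
  define m where "m = L div ?q"
  define r where "r = L mod ?q"
  have L: "L = m * ?q + r" unfolding m_def r_def by (rule div_mult_mod_eq[symmetric])
  have "r < ?q" unfolding r_def using cf_den_pos[OF assms(1)] by simp
  have "L < (nat (cf_quot \<alpha> (Suc k)) + 1) * ?q"
    using Suc.prems cf_den_Suc_Suc_le[OF assms(1), of k] by simp
  then have "m < nat (cf_quot \<alpha> (Suc k)) + 1"
    unfolding m_def by (rule less_mult_imp_div_less)
  then have m: "real m \<le> cf_quot \<alpha> (Suc k)"
    using cf_quot_Suc_ge_1[OF assms(1), of k] by linarith
  have "frac_count \<alpha> a L x = frac_count \<alpha> a (m * ?q) x + frac_count \<alpha> (a + m * ?q) r x"
    unfolding L by (rule frac_count_add)
  moreover have "\<bar>frac_count \<alpha> a (m * ?q) x - real (m * ?q) * x\<bar> \<le> 3 * m"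
    by (rule frac_count_mult_cf_den[OF assms(1-3)])
  moreover have "\<bar>frac_count \<alpha> (a + m * ?q) r x - r * x\<bar> \<le> 3 * real_of_int (\<Sum>i=1..k. cf_quot \<alpha> i)"
    using Suc.IH \<open>r < ?q\<close> by simp
  moreover have "real L * x = real (m * ?q) * x + real r * x"
    unfolding L by (simp add: algebra_simps)
  ultimately show ?case using m unfolding abs_le_iff by simp
qed

lemma frac_count_discrepancy_log:
  fixes x B :: real
  assumes "\<alpha> \<notin> \<rat>" and "\<forall>m\<ge>1. real_of_int (\<Sum>k=1..m. cf_quot \<alpha> k) \<le> B * real m"
    and "L \<le> n" and "0 \<le> x" "x \<le> 1"
  shows "\<bar>frac_count \<alpha> a L x - L * x\<bar> \<le> 6 * B * (floor_log n + 1)"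
proof -
  define j where "j = Suc (floor_log n)"
  have "L < 2 ^ j"
    using assms(3) floor_log_exp2_gt[of n] unfolding j_def by simp
  also have "2 ^ j \<le> cf_den \<alpha> (Suc (2 * j))"
    by (rule cf_den_ge_power2[OF assms(1)])
  finally have "\<bar>frac_count \<alpha> a L x - L * x\<bar> \<le> 3 * real_of_int (\<Sum>i=1..2 * j. cf_quot \<alpha> i)"
    by (rule frac_count_less_cf_den[OF assms(1,4,5)])
  also have "\<dots> \<le> 3 * (B * real (2 * j))"
    using assms(2)[rule_format, of "2 * j"] unfolding j_def by simp
  also have "\<dots> = 6 * B * (floor_log n + 1)" by (simp add: j_def algebra_simps)
  finally show ?thesis .
qed

section \<open>Sos permutations\<close>

lemma sos_perm_less:
  assumes "s \<in> {1..n}" and "frac (\<alpha> * real t) < frac (\<alpha> * real s)"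
  shows "sos_perm \<alpha> n t < sos_perm \<alpha> n s"
proof -
  let ?A = "\<lambda>u. {v \<in> {1..n}. frac (\<alpha> * real v) \<le> frac (\<alpha> * real u)}"
  have "?A t \<subseteq> ?A s" using assms(2) by auto
  moreover have "s \<in> ?A s" "s \<notin> ?A t" using assms by auto
  ultimately have "?A t \<subset> ?A s" by blast
  then show ?thesis unfolding sos_perm_def by (intro psubset_card_mono) auto
qed

lemma sos_perm_le_iff:
  assumes "s \<in> {1..n}" "t \<in> {1..n}"
  shows "sos_perm \<alpha> n s \<le> sos_perm \<alpha> n t \<longleftrightarrow> frac (\<alpha> * real s) \<le> frac (\<alpha> * real t)"
proof
  show "frac (\<alpha> * real s) \<le> frac (\<alpha> * real t) \<Longrightarrow> sos_perm \<alpha> n s \<le> sos_perm \<alpha> n t"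
    unfolding sos_perm_def by (intro card_mono) auto
  show "sos_perm \<alpha> n s \<le> sos_perm \<alpha> n t \<Longrightarrow> frac (\<alpha> * real s) \<le> frac (\<alpha> * real t)"
    using sos_perm_less[OF assms(1), of \<alpha> t] by linarith
qed

lemma sos_perm_range:
  assumes "s \<in> {1..n}" shows "sos_perm \<alpha> n s \<in> {1..n}"
proof -
  have "{s} \<subseteq> {t \<in> {1..n}. frac (\<alpha> * real t) \<le> frac (\<alpha> * real s)}" using assms by simp
  then have "card {s} \<le> sos_perm \<alpha> n s" unfolding sos_perm_def by (intro card_mono) auto
  then have "1 \<le> sos_perm \<alpha> n s" by simp
  moreover have "sos_perm \<alpha> n s \<le> card {1..n}" unfolding sos_perm_def by (intro card_mono) auto
  ultimately show ?thesis by simp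
qed

lemma frac_mult_inj:
  assumes "\<alpha> \<notin> \<rat>" and "frac (\<alpha> * real s) = frac (\<alpha> * real t)"
  shows "s = t"
proof (rule ccontr)
  assume "s \<noteq> t"
  have "\<alpha> * (real s - real t) = of_int (\<lfloor>\<alpha> * real s\<rfloor> - \<lfloor>\<alpha> * real t\<rfloor>)"
    using assms(2) unfolding frac_def by (simp add: algebra_simps)
  then have "\<alpha> = of_int (\<lfloor>\<alpha> * real s\<rfloor> - \<lfloor>\<alpha> * real t\<rfloor>) / (real s - real t)"
    using \<open>s \<noteq> t\<close> by (simp add: field_simps)
  moreover have "of_int (\<lfloor>\<alpha> * real s\<rfloor> - \<lfloor>\<alpha> * real t\<rfloor>) / (real s - real t) \<in> \<rat>"
    by (intro Rats_divide Rats_diff Rats_of_int Rats_of_nat)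
  ultimately show False using assms(1) by simp
qed

lemma bij_betw_sos_perm:
  assumes "\<alpha> \<notin> \<rat>" shows "bij_betw (sos_perm \<alpha> n) {1..n} {1..n}"
proof -
  have "inj_on (sos_perm \<alpha> n) {1..n}"
  proof
    fix s t assume st: "s \<in> {1..n}" "t \<in> {1..n}" and "sos_perm \<alpha> n s = sos_perm \<alpha> n t"
    then have "frac (\<alpha> * real s) \<le> frac (\<alpha> * real t)" "frac (\<alpha> * real t) \<le> frac (\<alpha> * real s)"
      using sos_perm_le_iff[OF st, where \<alpha> = \<alpha>] sos_perm_le_iff[OF st(2,1), where \<alpha> = \<alpha>] by simp_all
    then have "frac (\<alpha> * real s) = frac (\<alpha> * real t)" by simp
    then show "s = t" by (rule frac_mult_inj[OF assms])
  qed
  moreover have "sos_perm \<alpha> n ` {1..n} \<subseteq> {1..n}" using sos_perm_range by blast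
  ultimately show ?thesis unfolding bij_betw_def using endo_inj_surj by blast
qed

lemma sos_perm_le_threshold:
  assumes "\<alpha> \<notin> \<rat>" and "r \<le> n"
  obtains x where "0 \<le> x" "x \<le> 1"
    "\<And>s. s \<in> {1..n} \<Longrightarrow> sos_perm \<alpha> n s \<le> r \<longleftrightarrow> frac (\<alpha> * real s) < x"
proof (cases "r = n")
  case True
  show ?thesis
  proof (rule that[of 1])
    fix s assume "s \<in> {1..n}"
    then show "sos_perm \<alpha> n s \<le> r \<longleftrightarrow> frac (\<alpha> * real s) < 1"
      using sos_perm_range[of s n \<alpha>] True frac_lt_1 by simp
  qed simp_all
next
  case False
  then have "r + 1 \<in> sos_perm \<alpha> n ` {1..n}"
    using assms(2) bij_betw_imp_surj_on[OF bij_betw_sos_perm[OF assms(1)]] by simp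
  then obtain s' where s': "s' \<in> {1..n}" "sos_perm \<alpha> n s' = r + 1" by (auto simp del: atLeastAtMost_iff)
  show ?thesis
  proof (rule that[of "frac (\<alpha> * real s')"])
    fix s assume "s \<in> {1..n}"
    then show "sos_perm \<alpha> n s \<le> r \<longleftrightarrow> frac (\<alpha> * real s) < frac (\<alpha> * real s')"
      using sos_perm_le_iff[OF s'(1), of s, where \<alpha> = \<alpha>] s'(2) by auto
  qed (simp_all add: frac_ge_0 less_imp_le[OF frac_lt_1])
qed

lemma card_sos_perm_le:
  assumes "\<alpha> \<notin> \<rat>" and "r \<le> n"
  shows "card {s \<in> {1..n}. sos_perm \<alpha> n s \<le> r} = r"
proof -
  have bij: "bij_betw (sos_perm \<alpha> n) {1..n} {1..n}" by (rule bij_betw_sos_perm[OF assms(1)])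
  have "sos_perm \<alpha> n ` {s \<in> {1..n}. sos_perm \<alpha> n s \<le> r} = {t \<in> sos_perm \<alpha> n ` {1..n}. t \<le> r}"
    by auto
  also have "\<dots> = {1..r}" using bij_betw_imp_surj_on[OF bij] assms(2) by auto
  finally have image: "sos_perm \<alpha> n ` {s \<in> {1..n}. sos_perm \<alpha> n s \<le> r} = {1..r}" .
  have "inj_on (sos_perm \<alpha> n) {s \<in> {1..n}. sos_perm \<alpha> n s \<le> r}"
    using bij_betw_imp_inj_on[OF bij] by (rule inj_on_subset) auto
  then show ?thesis using card_image image by fastforce
qed

section \<open>Intervals of \<open>\<int>\<^sub>n\<close>\<close>

definition zn_interval :: "nat \<Rightarrow> nat \<Rightarrow> nat \<Rightarrow> nat set" where
  "zn_interval n a L = (\<lambda>i. (a + i) mod n + 1) ` {..<L}"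

lemma zn_intervals_eq: "zn_intervals n = {zn_interval n a L | a L. a < n \<and> L \<le> n}"
proof -
  have "{(a + i) mod n + 1 | i. i < L} = zn_interval n a L" for a L
    unfolding zn_interval_def by auto
  then show ?thesis unfolding zn_intervals_def by simp
qed

lemma finite_zn_intervals: "finite (zn_intervals n)"
proof -
  have "zn_intervals n = (\<lambda>(a, L). zn_interval n a L) ` ({..<n} \<times> {..n})"
    unfolding zn_intervals_eq by auto
  then show ?thesis by simp
qed

lemma empty_in_zn_intervals: "0 < n \<Longrightarrow> {} \<in> zn_intervals n"
  unfolding zn_intervals_eq zn_interval_def by auto

lemma zn_interval_subset: "0 < n \<Longrightarrow> zn_interval n a L \<subseteq> {1..n}"
  unfolding zn_interval_def by (auto simp: Suc_leI)

lemma add_mod_eq_if: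
  fixes a i n :: nat
  assumes "a < n" "i < n"
  shows "(a + i) mod n = (if a + i < n then a + i else a + i - n)"
proof (cases "a + i < n")
  case False
  then have "(a + i) mod n = (a + i - n) mod n" by (intro le_mod_geq) simp
  then show ?thesis using assms False by simp
qed simp

lemma inj_on_zn_interval:
  fixes a n L :: nat
  assumes "a < n" "L \<le> n"
  shows "inj_on (\<lambda>i. (a + i) mod n + 1) {..<L}"
proof (rule inj_onI)
  fix i j assume "i \<in> {..<L}" "j \<in> {..<L}" and eq: "(a + i) mod n + 1 = (a + j) mod n + 1"
  then have "i < n" "j < n" using assms by auto
  then show "i = j" using eq add_mod_eq_if[OF assms(1)] by (auto split: if_splits)
qed

lemma card_zn_interval:
  assumes "a < n" "L \<le> n" shows "card (zn_interval n a L) = L"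
  unfolding zn_interval_def using card_image[OF inj_on_zn_interval[OF assms]] by simp

lemma mem_zn_interval_iff:
  assumes "b < n" "M \<le> n" "t \<in> {1..n}"
  shows "t \<in> zn_interval n b M \<longleftrightarrow> (b < t \<and> t \<le> b + M) \<or> t + n \<le> b + M"
proof
  assume "t \<in> zn_interval n b M"
  then obtain i where "i < M" "t = (b + i) mod n + 1" unfolding zn_interval_def by auto
  then show "(b < t \<and> t \<le> b + M) \<or> t + n \<le> b + M"
    using assms add_mod_eq_if[OF assms(1), of i] by (auto split: if_splits)
next
  assume t: "(b < t \<and> t \<le> b + M) \<or> t + n \<le> b + M"
  define i where "i = (if b < t then t - 1 - b else t + n - 1 - b)"
  have "i < M" "i < n" using t assms unfolding i_def by auto
  moreover have "t = (b + i) mod n + 1"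
    using t assms add_mod_eq_if[OF assms(1) \<open>i < n\<close>] unfolding i_def by auto
  ultimately show "t \<in> zn_interval n b M" unfolding zn_interval_def by auto
qed

lemma zn_interval_indicator_initial_segments:
  assumes "b < n" "M \<le> n"
  obtains r1 r2 r3 where "r1 \<le> n" "r2 \<le> n" "r3 \<le> n" "real M = real r2 - real r1 + real r3"
    "\<And>t. t \<in> {1..n} \<Longrightarrow> (if t \<in> zn_interval n b M then 1 else 0)
        = (if t \<le> r2 then 1 else 0) - (if t \<le> r1 then 1 else 0) + (if t \<le> r3 then 1 else (0::real))"
proof (cases "b + M \<le> n")
  case True
  show ?thesis
    by (rule that[of b "b + M" 0]) (use True assms in \<open>auto simp: mem_zn_interval_iff\<close>)
next
  case False
  show ?thesis
    by (rule that[of b n "b + M - n"]) (use False assms in \<open>auto simp: mem_zn_interval_iff\<close>)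
qed

section \<open>Discrepancy of the Sos permutation\<close>

lemma real_card_filter_eq_sum:
  assumes "finite A" shows "real (card {x \<in> A. P x}) = (\<Sum>x\<in>A. if P x then 1 else 0)"
  using sum.inter_filter[OF assms, of "\<lambda>_. 1::real" P] by simp

lemma card_image_zn_interval_inter:
  assumes "inj_on \<sigma> {1..n}" "a < n" "L \<le> n"
  shows "card (\<sigma> ` zn_interval n a L \<inter> J) = card {i \<in> {..<L}. \<sigma> ((a + i) mod n + 1) \<in> J}"
proof -
  let ?f = "\<lambda>i. (a + i) mod n + 1"
  have "inj_on (\<sigma> \<circ> ?f) {..<L}"
    using assms inj_on_zn_interval[OF assms(2,3)] zn_interval_subset[of n a L]
    unfolding zn_interval_def by (intro comp_inj_on) (auto intro: inj_on_subset)
  then have "inj_on (\<sigma> \<circ> ?f) {i \<in> {..<L}. \<sigma> (?f i) \<in> J}" by (rule inj_on_subset) auto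
  moreover have "\<sigma> ` zn_interval n a L \<inter> J = (\<sigma> \<circ> ?f) ` {i \<in> {..<L}. \<sigma> (?f i) \<in> J}"
    unfolding zn_interval_def by auto
  ultimately show ?thesis by (simp only: card_image)
qed

lemma perm_disc_nonneg:
  assumes "0 < n" shows "0 \<le> perm_disc n \<sigma>"
proof -
  have "finite {disc_set n J (\<sigma> ` I) | I J. I \<in> zn_intervals n \<and> J \<in> zn_intervals n}"
    using finite_zn_intervals by (simp add: finite_image_set2)
  moreover have "disc_set n {} (\<sigma> ` {}) \<in> {disc_set n J (\<sigma> ` I) | I J. I \<in> zn_intervals n \<and> J \<in> zn_intervals n}"
    using empty_in_zn_intervals[OF assms] by blast
  ultimately have "disc_set n {} (\<sigma> ` {}) \<le> perm_disc n \<sigma>"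
    unfolding perm_disc_def by (rule Max_ge)
  then show ?thesis by (simp add: disc_set_def)
qed

lemma perm_disc_le:
  assumes "0 < n"
    and "\<And>a L b M. a < n \<Longrightarrow> L \<le> n \<Longrightarrow> b < n \<Longrightarrow> M \<le> n \<Longrightarrow>
      disc_set n (zn_interval n b M) (\<sigma> ` zn_interval n a L) \<le> c"
  shows "perm_disc n \<sigma> \<le> c"
  unfolding perm_disc_def
proof (rule Max.boundedI)
  show "finite {disc_set n J (\<sigma> ` I) | I J. I \<in> zn_intervals n \<and> J \<in> zn_intervals n}"
    using finite_zn_intervals by (simp add: finite_image_set2)
  show "{disc_set n J (\<sigma> ` I) | I J. I \<in> zn_intervals n \<and> J \<in> zn_intervals n} \<noteq> {}"
    using empty_in_zn_intervals[OF assms(1)] by blast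
qed (use assms(2) in \<open>auto simp: zn_intervals_eq\<close>)

context
  fixes \<alpha> :: real and n :: nat and E :: real
  assumes irrational: "\<alpha> \<notin> \<rat>" and n_pos: "0 < n"
    and frac_count_bound: "\<And>a L x. L \<le> n \<Longrightarrow> 0 \<le> x \<Longrightarrow> x \<le> 1 \<Longrightarrow> \<bar>frac_count \<alpha> a L x - L * x\<bar> \<le> E"
begin

lemma count_zn_interval_frac_less:
  assumes "a < n" "L \<le> n" "0 \<le> x" "x \<le> 1"
  shows "\<bar>(\<Sum>i<L. if frac (\<alpha> * real ((a + i) mod n + 1)) < x then 1 else 0) - L * x\<bar> \<le> 2 * E"
proof -
  define L1 where "L1 = min L (n - a)"
  define L2 where "L2 = L - L1"
  let ?h = "\<lambda>i. if frac (\<alpha> * real ((a + i) mod n + 1)) < x then 1 else (0::real)"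
  have L: "L = L1 + L2" unfolding L1_def L2_def by simp
  have "(\<Sum>i<L. ?h i) = (\<Sum>i<L1. ?h i) + (\<Sum>i<L2. ?h (L1 + i))"
    by (subst L) (rule sum_lessThan_add)
  also have "(\<Sum>i<L1. ?h i) = frac_count \<alpha> (a + 1) L1 x"
    unfolding frac_count_def
  proof (intro sum.cong refl)
    fix i assume "i \<in> {..<L1}"
    then have "a + i < n" unfolding L1_def by (simp add: less_diff_conv add.commute)
    then have "(a + i) mod n + 1 = a + 1 + i" by simp
    then show "?h i = (if frac (\<alpha> * real (a + 1 + i)) < x then 1 else 0)" by simp
  qed
  also have "(\<Sum>i<L2. ?h (L1 + i)) = frac_count \<alpha> 1 L2 x"
    unfolding frac_count_def
  proof (intro sum.cong refl)
    fix i assume "i \<in> {..<L2}"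
    then have "L1 = n - a" "i < n" using assms(1,2) unfolding L1_def L2_def by auto
    then have "(a + (L1 + i)) mod n + 1 = 1 + i" using assms(1) by simp
    then show "?h (L1 + i) = (if frac (\<alpha> * real (1 + i)) < x then 1 else 0)" by simp
  qed
  finally have "(\<Sum>i<L. ?h i) = frac_count \<alpha> (a + 1) L1 x + frac_count \<alpha> 1 L2 x" .
  moreover have "real L * x = real L1 * x + real L2 * x"
    by (subst L) (simp add: algebra_simps)
  moreover have "L1 \<le> n" "L2 \<le> n" using assms(2) unfolding L1_def L2_def by simp_all
  ultimately show ?thesis
    using frac_count_bound[of L1 x "a + 1"] frac_count_bound[of L2 x 1] assms(3,4)
    unfolding abs_le_iff by linarith
qed

lemma count_zn_interval_sos_perm_le:
  assumes "a < n" "L \<le> n" "r \<le> n"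
  shows "\<bar>(\<Sum>i<L. if sos_perm \<alpha> n ((a + i) mod n + 1) \<le> r then 1 else 0) - L * r / n\<bar> \<le> 3 * E"
proof -
  obtain x where x: "0 \<le> x" "x \<le> 1"
    and threshold: "\<And>s. s \<in> {1..n} \<Longrightarrow> sos_perm \<alpha> n s \<le> r \<longleftrightarrow> frac (\<alpha> * real s) < x"
    using sos_perm_le_threshold[OF irrational assms(3)] by blast
  have "(\<Sum>i<L. if sos_perm \<alpha> n ((a + i) mod n + 1) \<le> r then 1 else 0)
      = (\<Sum>i<L. if frac (\<alpha> * real ((a + i) mod n + 1)) < x then 1 else (0::real))"
    using threshold n_pos by (intro sum.cong) (auto simp: Suc_leI)
  then have count: "\<bar>(\<Sum>i<L. if sos_perm \<alpha> n ((a + i) mod n + 1) \<le> r then 1 else 0) - L * x\<bar> \<le> 2 * E"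
    using count_zn_interval_frac_less[OF assms(1,2) x] by simp
  have "real r = real (card {s \<in> {1..n}. frac (\<alpha> * real s) < x})"
    using card_sos_perm_le[OF irrational assms(3)] threshold by (metis (no_types, lifting) Collect_cong)
  also have "\<dots> = (\<Sum>s\<in>{1..n}. if frac (\<alpha> * real s) < x then 1 else 0)"
    by (rule real_card_filter_eq_sum) simp
  also have "\<dots> = frac_count \<alpha> 1 n x"
    unfolding frac_count_def One_nat_def sum.atLeast1_atMost_eq by simp
  finally have "\<bar>r - n * x\<bar> \<le> E" using frac_count_bound[of n x 1] x by simp
  have "real L * r / n - L * x = L / n * (r - n * x)" using n_pos by (simp add: field_simps)
  then have "\<bar>real L * r / n - L * x\<bar> = L / n * \<bar>r - n * x\<bar>" by (simp add: abs_mult)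
  also have "\<dots> \<le> 1 * E"
    using \<open>\<bar>r - n * x\<bar> \<le> E\<close> assms(2) n_pos by (intro mult_mono) auto
  finally have "\<bar>real L * r / n - L * x\<bar> \<le> E" by simp
  then show ?thesis using count by linarith
qed

lemma disc_set_zn_interval_le:
  assumes "a < n" "L \<le> n" "b < n" "M \<le> n"
  shows "disc_set n (zn_interval n b M) (sos_perm \<alpha> n ` zn_interval n a L) \<le> 9 * E"
proof -
  let ?s = "sos_perm \<alpha> n" and ?f = "\<lambda>i. (a + i) mod n + 1"
  define J where "J = zn_interval n b M"
  have inj: "inj_on ?s {1..n}" by (rule bij_betw_imp_inj_on[OF bij_betw_sos_perm[OF irrational]])
  have card_I: "card (?s ` zn_interval n a L) = L"
    using card_image_zn_interval_inter[OF inj assms(1,2), of UNIV] by simp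
  have "real (card (?s ` zn_interval n a L \<inter> J)) = (\<Sum>i<L. if ?s (?f i) \<in> J then 1 else 0)"
    using card_image_zn_interval_inter[OF inj assms(1,2), of J] real_card_filter_eq_sum[of "{..<L}"]
    by simp
  obtain r1 r2 r3 where r: "r1 \<le> n" "r2 \<le> n" "r3 \<le> n" and M: "real M = real r2 - real r1 + real r3"
    and indicator: "\<And>t. t \<in> {1..n} \<Longrightarrow> (if t \<in> J then 1 else 0)
        = (if t \<le> r2 then 1 else 0) - (if t \<le> r1 then 1 else 0) + (if t \<le> r3 then 1 else (0::real))"
    using zn_interval_indicator_initial_segments[OF assms(3,4)] unfolding J_def by blast
  define F where "F r = (\<Sum>i<L. if ?s (?f i) \<le> r then 1 else (0::real))" for r
  have F: "\<bar>F r - real L * r / n\<bar> \<le> 3 * E" if "r \<le> n" for r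
    unfolding F_def by (rule count_zn_interval_sos_perm_le[OF assms(1,2) that])
  have "(\<Sum>i<L. if ?s (?f i) \<in> J then 1 else (0::real)) = F r2 - F r1 + F r3"
    unfolding F_def sum_subtractf[symmetric] sum.distrib[symmetric]
  proof (intro sum.cong refl)
    fix i assume "i \<in> {..<L}"
    then have "?s (?f i) \<in> {1..n}"
      using sos_perm_range zn_interval_subset[OF n_pos, of a L] unfolding zn_interval_def by blast
    then show "(if ?s (?f i) \<in> J then 1 else 0) = (if ?s (?f i) \<le> r2 then 1 else 0)
        - (if ?s (?f i) \<le> r1 then 1 else 0) + (if ?s (?f i) \<le> r3 then 1 else (0::real))"
      by (rule indicator)
  qed
  moreover have "real L * M / n = real L * r2 / n - real L * r1 / n + real L * r3 / n"
    using n_pos unfolding M by (simp add: field_simps)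
  ultimately have "disc_set n J (?s ` zn_interval n a L)
      = \<bar>(F r2 - real L * r2 / n) - (F r1 - real L * r1 / n) + (F r3 - real L * r3 / n)\<bar>"
    using \<open>real (card _) = _\<close> card_I card_zn_interval[OF assms(3,4)]
    unfolding disc_set_def J_def by (simp add: algebra_simps)
  then show ?thesis
    using F[OF r(1)] F[OF r(2)] F[OF r(3)] unfolding J_def abs_le_iff by linarith
qed

lemma perm_disc_sos_perm_le: "perm_disc n (sos_perm \<alpha> n) \<le> 9 * E"
  by (rule perm_disc_le[OF n_pos disc_set_zn_interval_le])

end

lemma floor_log_Suc_le_ln:
  assumes "2 \<le> n" shows "real (floor_log n + 1) \<le> 2 / ln 2 * ln n"
proof -
  have "real (floor_log n) \<le> log 2 n" using assms by (simp add: floor_log_altdef)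
  moreover have "1 \<le> log 2 n" using assms by simp
  ultimately have "real (floor_log n + 1) \<le> 2 * log 2 n" by simp
  then show ?thesis by (simp add: log_def)
qed

theorem mainTheorem13:
  fixes \<alpha> :: real
  assumes "\<alpha> \<notin> \<rat>"
    and "pq_bounded_in_average \<alpha>"
  shows "(\<lambda>n. perm_disc n (sos_perm \<alpha> n)) \<in> O(\<lambda>n. ln (real n))"
proof -
  obtain B where B: "\<forall>m\<ge>1. real_of_int (\<Sum>k=1..m. cf_quot \<alpha> k) \<le> B * real m"
    using assms(2) unfolding pq_bounded_in_average_def by blast
  have "B \<ge> 0" using B cf_quot_Suc_ge_1[OF assms(1), of 0] by force
  have "norm (perm_disc n (sos_perm \<alpha> n)) \<le> 108 * B / ln 2 * norm (ln (real n))" if "2 \<le> n" for n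
  proof -
    have "perm_disc n (sos_perm \<alpha> n) \<le> 9 * (6 * B * (floor_log n + 1))"
      by (rule perm_disc_sos_perm_le[OF assms(1)])
        (use that frac_count_discrepancy_log[OF assms(1) B] in auto)
    also have "\<dots> = 54 * B * real (floor_log n + 1)" by simp
    also have "\<dots> \<le> 54 * B * (2 / ln 2 * ln n)"
      using floor_log_Suc_le_ln[OF that] \<open>B \<ge> 0\<close> by (intro mult_left_mono) simp_all
    finally show ?thesis using perm_disc_nonneg[of n] that by simp
  qed
  then have "\<forall>\<^sub>F n in at_top. norm (perm_disc n (sos_perm \<alpha> n)) \<le> 108 * B / ln 2 * norm (ln (real n))"
    unfolding eventually_at_top_linorder by blast
  then show ?thesis by (rule bigoI)
qed

end
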